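(* Let $G,H$ be connected graphs. If $\iota(G),\iota(H)<\infty$ then $\iota(G\,\Box\,H)=\iota(G)+\iota(H)$. If $\iota(G)=\infty$ or $\iota(H)=\infty$, then $\iota(G\,\Box\,H)=\infty$.
   Context: For a connected graph $G$ on vertices $v_1,\dots,v_n$, its distance matrix is $D=(d(v_i,v_j))_{i,j=1}^n$, where $d$ is the shortest-path distance; $\vec 1$ denotes the all-ones vector. $G$ is distance exceptional if $D\vec x=\vec 1$ has no solution. A curvature potential is a vector $\vec x$ with $D\vec x=\vec 1$. Curvature index $\iota(G)\in\mathbb{R}\cup\{\infty\}$: if $G$ is distance exceptional or has a curvature potential $\vec x$ with $\vec 1^\top\vec x\neq0$, then $\iota(G)$ is the unique real number with $\{D\vec x:\vec 1^\top\vec x=1\}\cap\mathbb{R}\vec 1=\{\iota(G)\vec 1\}$ (this intersection is a single point); otherwise (curvature potentials exist and all have $\vec 1^\top\vec x=0$) $\iota(G)=\infty$. The Cartesian product $G\,\Box\,H$ has vertex set $V(G)\times V(H)$, with $(u,v)\sim(u',v')$ iff either $u=u'$ and $\{v,v'\}\in E(H)$, or $v=v'$ and $\{u,u'\}\in E(G)$. *)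

theory Defs
  imports Main "HOL-Library.Extended_Real"
begin

definition simple_graph :: "'a set \<Rightarrow> ('a \<Rightarrow> 'a \<Rightarrow> bool) \<Rightarrow> bool" where
  "simple_graph V E \<longleftrightarrow> finite V \<and> V \<noteq> {} \<and>
     (\<forall>u v. E u v \<longrightarrow> u \<in> V \<and> v \<in> V) \<and>
     (\<forall>u v. E u v \<longrightarrow> E v u) \<and> (\<forall>u. \<not> E u u)"

definition walk_of_length :: "('a \<Rightarrow> 'a \<Rightarrow> bool) \<Rightarrow> 'a \<Rightarrow> 'a \<Rightarrow> nat \<Rightarrow> bool" where
  "walk_of_length E u v n \<longleftrightarrow> (\<exists>xs. length xs = Suc n \<and> xs ! 0 = u \<and> xs ! n = v \<and>
      (\<forall>i<n. E (xs ! i) (xs ! Suc i)))"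

definition connected_graph :: "'a set \<Rightarrow> ('a \<Rightarrow> 'a \<Rightarrow> bool) \<Rightarrow> bool" where
  "connected_graph V E \<longleftrightarrow> simple_graph V E \<and>
     (\<forall>u\<in>V. \<forall>v\<in>V. \<exists>n. walk_of_length E u v n)"

definition gdist :: "('a \<Rightarrow> 'a \<Rightarrow> bool) \<Rightarrow> 'a \<Rightarrow> 'a \<Rightarrow> nat" where
  "gdist E u v = (LEAST n. walk_of_length E u v n)"

definition dist_mult :: "'a set \<Rightarrow> ('a \<Rightarrow> 'a \<Rightarrow> bool) \<Rightarrow> ('a \<Rightarrow> real) \<Rightarrow> 'a \<Rightarrow> real" where
  "dist_mult V E x v = (\<Sum>w\<in>V. real (gdist E v w) * x w)"

definition curvature_potential :: "'a set \<Rightarrow> ('a \<Rightarrow> 'a \<Rightarrow> bool) \<Rightarrow> ('a \<Rightarrow> real) \<Rightarrow> bool" where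
  "curvature_potential V E x \<longleftrightarrow> (\<forall>v\<in>V. dist_mult V E x v = 1)"

definition distance_exceptional :: "'a set \<Rightarrow> ('a \<Rightarrow> 'a \<Rightarrow> bool) \<Rightarrow> bool" where
  "distance_exceptional V E \<longleftrightarrow> \<not> (\<exists>x. curvature_potential V E x)"

definition curvature_index :: "'a set \<Rightarrow> ('a \<Rightarrow> 'a \<Rightarrow> bool) \<Rightarrow> ereal" where
  "curvature_index V E =
     (if distance_exceptional V E \<or> (\<exists>x. curvature_potential V E x \<and> sum x V \<noteq> 0)
      then ereal (THE c. \<exists>x. sum x V = 1 \<and> (\<forall>v\<in>V. dist_mult V E x v = c))
      else \<infinity>)"

definition cart_edges :: "'a set \<Rightarrow> ('a \<Rightarrow> 'a \<Rightarrow> bool) \<Rightarrow> 'b set \<Rightarrow> ('b \<Rightarrow> 'b \<Rightarrow> bool)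
    \<Rightarrow> ('a \<times> 'b) \<Rightarrow> ('a \<times> 'b) \<Rightarrow> bool" where
  "cart_edges V1 E1 V2 E2 p q \<longleftrightarrow>
     (fst p = fst q \<and> fst p \<in> V1 \<and> E2 (snd p) (snd q)) \<or>
     (snd p = snd q \<and> snd p \<in> V2 \<and> E1 (fst p) (fst q))"

end

theory Submission
  imports Defs
begin

text \<open>Distances in \<open>G \<box> H\<close> add: \<open>d((u,v),(u',v')) = d(u,u') + d(v,v')\<close>. Hence for any
  vector \<open>z\<close> on \<open>V(G) \<times> V(H)\<close> the value of \<open>D z\<close> at \<open>(u,v)\<close> is the sum of the distance
  matrices of \<open>G\<close> and \<open>H\<close> applied to the two marginals of \<open>z\<close>, evaluated at \<open>u\<close> and \<open>v\<close>.
  The index is finite exactly when some \<open>x\<close> with \<open>\<Sum> x = 1\<close> has \<open>D x\<close> constant, and then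
  it is that constant (unique since \<open>D\<close> is symmetric): for a distance exceptional graph
  the Fredholm alternative yields such an \<open>x\<close> with \<open>D x = 0\<close>. Tensor products of such
  vectors for \<open>G\<close> and \<open>H\<close> give one for \<open>G \<box> H\<close> with constant \<open>\<iota>(G) + \<iota>(H)\<close>; conversely
  the marginals of one for \<open>G \<box> H\<close> give such vectors for \<open>G\<close> and \<open>H\<close>.\<close>

lemma walk_of_length_0_iff: "walk_of_length E u v 0 \<longleftrightarrow> u = v"
  unfolding walk_of_length_def by (auto intro: exI[of _ "[u]"])

lemma walk_of_length_Suc_iff:
  "walk_of_length E u v (Suc n) \<longleftrightarrow> (\<exists>w. E u w \<and> walk_of_length E w v n)"
proof
  assume "walk_of_length E u v (Suc n)"
  then obtain xs where xs: "length xs = Suc (Suc n)" "xs ! 0 = u" "xs ! Suc n = v"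
    "\<forall>i<Suc n. E (xs ! i) (xs ! Suc i)" unfolding walk_of_length_def by blast
  have "E u (xs ! 1)" using xs(2,4) by force
  moreover have "walk_of_length E (xs ! 1) v n"
    unfolding walk_of_length_def using xs by (intro exI[of _ "tl xs"]) (auto simp: nth_tl)
  ultimately show "\<exists>w. E u w \<and> walk_of_length E w v n" by blast
next
  assume "\<exists>w. E u w \<and> walk_of_length E w v n"
  then obtain w xs where w: "E u w" and xs: "length xs = Suc n" "xs ! 0 = w" "xs ! n = v"
    "\<forall>i<n. E (xs ! i) (xs ! Suc i)" unfolding walk_of_length_def by blast
  have "E ((u # xs) ! i) ((u # xs) ! Suc i)" if "i < Suc n" for i
    using w xs that by (cases i) auto
  then show "walk_of_length E u v (Suc n)"
    unfolding walk_of_length_def using xs by (intro exI[of _ "u # xs"]) auto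
qed

lemma walk_of_length_add:
  "walk_of_length E u w a \<Longrightarrow> walk_of_length E w v b \<Longrightarrow> walk_of_length E u v (a + b)"
  by (induction a arbitrary: u) (auto simp: walk_of_length_0_iff walk_of_length_Suc_iff)

lemma walk_of_length_commute:
  assumes sym: "\<And>u v. E u v \<Longrightarrow> E v u"
  shows "walk_of_length E u v n \<Longrightarrow> walk_of_length E v u n"
proof (induction n arbitrary: u)
  case 0
  then show ?case by (simp add: walk_of_length_0_iff)
next
  case (Suc n)
  then obtain w where "E u w" "walk_of_length E w v n" by (auto simp: walk_of_length_Suc_iff)
  then have "walk_of_length E v w n" "walk_of_length E w u 1"
    using Suc.IH sym by (auto simp: walk_of_length_Suc_iff walk_of_length_0_iff)
  then show ?case using walk_of_length_add by fastforce
qed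

lemma gdist_commute:
  assumes "connected_graph V E"
  shows "gdist E u v = gdist E v u"
proof -
  have "\<And>u v. E u v \<Longrightarrow> E v u"
    using assms unfolding connected_graph_def simple_graph_def by blast
  then have "walk_of_length E u v n \<longleftrightarrow> walk_of_length E v u n" for n
    using walk_of_length_commute by metis
  then show ?thesis unfolding gdist_def by (intro arg_cong[where f = Least] ext)
qed

lemma walk_of_length_gdist:
  assumes "connected_graph V E" "u \<in> V" "v \<in> V"
  shows "walk_of_length E u v (gdist E u v)"
proof -
  obtain n where "walk_of_length E u v n"
    using assms unfolding connected_graph_def by blast
  then show ?thesis unfolding gdist_def by (rule LeastI)
qed

lemma walk_of_length_cart_fst:
  assumes "v \<in> V2"
  shows "walk_of_length E1 u u' n \<Longrightarrow> walk_of_length (cart_edges V1 E1 V2 E2) (u, v) (u', v) n"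
  by (induction n arbitrary: u)
    (use assms in \<open>auto simp: walk_of_length_0_iff walk_of_length_Suc_iff cart_edges_def\<close>)

lemma walk_of_length_cart_snd:
  assumes "u \<in> V1"
  shows "walk_of_length E2 v v' n \<Longrightarrow> walk_of_length (cart_edges V1 E1 V2 E2) (u, v) (u, v') n"
  by (induction n arbitrary: v)
    (use assms in \<open>auto simp: walk_of_length_0_iff walk_of_length_Suc_iff cart_edges_def\<close>)

lemma walk_of_length_cart_split:
  "walk_of_length (cart_edges V1 E1 V2 E2) p q n \<Longrightarrow>
    \<exists>a b. a + b = n \<and> walk_of_length E1 (fst p) (fst q) a \<and> walk_of_length E2 (snd p) (snd q) b"
proof (induction n arbitrary: p)
  case 0
  then show ?case by (auto simp: walk_of_length_0_iff)
next
  case (Suc n)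
  then obtain w where w: "cart_edges V1 E1 V2 E2 p w" "walk_of_length (cart_edges V1 E1 V2 E2) w q n"
    by (auto simp: walk_of_length_Suc_iff)
  then obtain a b where ab: "a + b = n" "walk_of_length E1 (fst w) (fst q) a"
    "walk_of_length E2 (snd w) (snd q) b"
    using Suc.IH by blast
  from w(1) show ?case
    unfolding cart_edges_def
  proof (elim disjE conjE)
    assume "fst p = fst w" "E2 (snd p) (snd w)"
    with ab show ?thesis by (intro exI[of _ a] exI[of _ "Suc b"]) (auto simp: walk_of_length_Suc_iff)
  next
    assume "snd p = snd w" "E1 (fst p) (fst w)"
    with ab show ?thesis by (intro exI[of _ "Suc a"] exI[of _ b]) (auto simp: walk_of_length_Suc_iff)
  qed
qed

lemma gdist_cart_edges:
  assumes "connected_graph V1 E1" "connected_graph V2 E2"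
    and "u \<in> V1" "u' \<in> V1" "v \<in> V2" "v' \<in> V2"
  shows "gdist (cart_edges V1 E1 V2 E2) (u, v) (u', v') = gdist E1 u u' + gdist E2 v v'"
  unfolding gdist_def[of "cart_edges V1 E1 V2 E2"]
proof (rule Least_equality)
  show "walk_of_length (cart_edges V1 E1 V2 E2) (u, v) (u', v') (gdist E1 u u' + gdist E2 v v')"
    using assms by (intro walk_of_length_add[OF walk_of_length_cart_fst walk_of_length_cart_snd]
        walk_of_length_gdist)
next
  fix n
  assume "walk_of_length (cart_edges V1 E1 V2 E2) (u, v) (u', v') n"
  then obtain a b where "a + b = n" "walk_of_length E1 u u' a" "walk_of_length E2 v v' b"
    using walk_of_length_cart_split by fastforce
  then show "gdist E1 u u' + gdist E2 v v' \<le> n"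
    unfolding gdist_def by (metis Least_le add_mono)
qed

lemma exists_dual_eq_one:
  fixes b :: "'r \<Rightarrow> real"
  assumes "finite R" "i0 \<in> R" "b i0 \<noteq> 0"
  shows "\<exists>y. (\<Sum>i\<in>R. y i * b i) = 1"
proof
  have "(\<Sum>i\<in>R. (if i = i0 then 1 / b i0 else 0) * b i) = (\<Sum>i\<in>R. if i = i0 then 1 / b i0 * b i0 else 0)"
    by (intro sum.cong) auto
  then show "(\<Sum>i\<in>R. (if i = i0 then 1 / b i0 else 0) * b i) = 1"
    using assms by simp
qed

lemma linear_solution_insert_column:
  fixes A :: "'r \<Rightarrow> 'c \<Rightarrow> real"
  assumes "finite S" "c \<notin> S" "\<forall>i\<in>R. (\<Sum>j\<in>S. A i j * x j) = b i - t * A i c"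
  shows "\<forall>i\<in>R. (\<Sum>j\<in>insert c S. A i j * (x(c := t)) j) = b i"
proof
  fix i
  assume "i \<in> R"
  have "(\<Sum>j\<in>S. A i j * (x(c := t)) j) = (\<Sum>j\<in>S. A i j * x j)"
    using assms(2) by (intro sum.cong) auto
  then show "(\<Sum>j\<in>insert c S. A i j * (x(c := t)) j) = b i"
    using assms \<open>i \<in> R\<close> by simp
qed

lemma linear_certificate_dependent_column:
  fixes A :: "'r \<Rightarrow> 'c \<Rightarrow> real"
  assumes "\<forall>i\<in>R. (\<Sum>j\<in>S. A i j * z j) = A i c" "\<forall>j\<in>S. (\<Sum>i\<in>R. y i * A i j) = 0"
  shows "(\<Sum>i\<in>R. y i * A i c) = 0"
proof -
  have "(\<Sum>i\<in>R. y i * A i c) = (\<Sum>i\<in>R. y i * (\<Sum>j\<in>S. A i j * z j))"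
    using assms(1) by (intro sum.cong) auto
  also have "\<dots> = (\<Sum>j\<in>S. z j * (\<Sum>i\<in>R. y i * A i j))"
    by (simp add: sum_distrib_left sum_distrib_right sum.swap[of _ R S] algebra_simps)
  also have "\<dots> = 0"
    using assms(2) by simp
  finally show ?thesis .
qed

text \<open>If column \<open>c\<close> is independent, \<open>y\<^sub>1\<close> separates it from the other columns, and a
  certificate \<open>y\<^sub>0\<close> for the reduced right-hand side \<open>b - s A\<^sub>c\<close> is corrected by a multiple of
  \<open>y\<^sub>1\<close> to also annihilate column \<open>c\<close>.\<close>
lemma linear_certificate_independent_column:
  fixes A :: "'r \<Rightarrow> 'c \<Rightarrow> real"
  assumes y1: "\<forall>j\<in>S. (\<Sum>i\<in>R. y1 i * A i j) = 0" "(\<Sum>i\<in>R. y1 i * A i c) = 1"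
    and y0: "\<forall>j\<in>S. (\<Sum>i\<in>R. y0 i * A i j) = 0"
      "(\<Sum>i\<in>R. y0 i * (b i - (\<Sum>k\<in>R. y1 k * b k) * A i c)) = 1"
  shows "\<exists>y. (\<forall>j\<in>insert c S. (\<Sum>i\<in>R. y i * A i j) = 0) \<and> (\<Sum>i\<in>R. y i * b i) = 1"
proof -
  define s where "s = (\<Sum>i\<in>R. y1 i * b i)"
  define t where "t = (\<Sum>i\<in>R. y0 i * A i c)"
  define y where "y = (\<lambda>i. y0 i - t * y1 i)"
  have y_lin: "(\<Sum>i\<in>R. y i * f i) = (\<Sum>i\<in>R. y0 i * f i) - t * (\<Sum>i\<in>R. y1 i * f i)" for f
    unfolding y_def by (simp add: algebra_simps sum_subtractf sum_distrib_left)
  have "\<forall>j\<in>insert c S. (\<Sum>i\<in>R. y i * A i j) = 0"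
    using y_lin y0(1) y1 t_def by auto
  moreover have "(\<Sum>i\<in>R. y0 i * (b i - s * A i c)) = (\<Sum>i\<in>R. y0 i * b i) - s * t"
    unfolding t_def by (simp add: algebra_simps sum_subtractf sum_distrib_left)
  then have "(\<Sum>i\<in>R. y i * b i) = 1"
    using y_lin[of b] y0(2) s_def by (simp add: mult.commute)
  ultimately show ?thesis by blast
qed

lemma linear_system_solvable_or_certificate:
  fixes A :: "'r \<Rightarrow> 'c \<Rightarrow> real"
  assumes "finite R" "finite S"
  shows "(\<exists>x. \<forall>i\<in>R. (\<Sum>j\<in>S. A i j * x j) = b i) \<or>
         (\<exists>y. (\<forall>j\<in>S. (\<Sum>i\<in>R. y i * A i j) = 0) \<and> (\<Sum>i\<in>R. y i * b i) = 1)"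
  using assms(2)
proof (induction S arbitrary: b rule: finite_induct)
  case empty
  then show ?case
    using exists_dual_eq_one[OF assms(1)] by force
next
  case (insert c S)
  show ?case
  proof (cases "\<exists>z. \<forall>i\<in>R. (\<Sum>j\<in>S. A i j * z j) = A i c")
    case True
    then obtain z where z: "\<forall>i\<in>R. (\<Sum>j\<in>S. A i j * z j) = A i c" by blast
    from insert.IH[of b] show ?thesis
    proof (elim disjE exE conjE)
      fix x
      assume "\<forall>i\<in>R. (\<Sum>j\<in>S. A i j * x j) = b i"
      then have "\<forall>i\<in>R. (\<Sum>j\<in>insert c S. A i j * (x(c := 0)) j) = b i"
        by (intro linear_solution_insert_column[OF insert.hyps]) simp
      then show ?thesis by blast
    next
      fix y
      assume y: "\<forall>j\<in>S. (\<Sum>i\<in>R. y i * A i j) = 0" "(\<Sum>i\<in>R. y i * b i) = 1"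
      moreover have "(\<Sum>i\<in>R. y i * A i c) = 0"
        using linear_certificate_dependent_column[OF z y(1)] .
      ultimately show ?thesis by auto
    qed
  next
    case False
    with insert.IH[of "\<lambda>i. A i c"] obtain y1 where y1: "\<forall>j\<in>S. (\<Sum>i\<in>R. y1 i * A i j) = 0"
      "(\<Sum>i\<in>R. y1 i * A i c) = 1" by blast
    from insert.IH[of "\<lambda>i. b i - (\<Sum>k\<in>R. y1 k * b k) * A i c"] show ?thesis
    proof (elim disjE exE conjE)
      fix x
      assume "\<forall>i\<in>R. (\<Sum>j\<in>S. A i j * x j) = b i - (\<Sum>k\<in>R. y1 k * b k) * A i c"
      then show ?thesis
        using linear_solution_insert_column[OF insert.hyps] by blast
    qed (use linear_certificate_independent_column[OF y1] in blast)
  qed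
qed

definition symmetric_gdist :: "'a set \<Rightarrow> ('a \<Rightarrow> 'a \<Rightarrow> bool) \<Rightarrow> bool" where
  "symmetric_gdist V E \<longleftrightarrow> (\<forall>u\<in>V. \<forall>v\<in>V. gdist E u v = gdist E v u)"

lemma connected_graph_symmetric_gdist: "connected_graph V E \<Longrightarrow> symmetric_gdist V E"
  unfolding symmetric_gdist_def by (metis gdist_commute)

lemma dist_mult_inner_commute:
  assumes "symmetric_gdist V E"
  shows "(\<Sum>v\<in>V. y v * dist_mult V E x v) = (\<Sum>v\<in>V. x v * dist_mult V E y v)"
proof -
  have "(\<Sum>v\<in>V. x v * dist_mult V E y v) = (\<Sum>v\<in>V. \<Sum>w\<in>V. x v * (real (gdist E v w) * y w))"
    unfolding dist_mult_def by (simp add: sum_distrib_left)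
  also have "\<dots> = (\<Sum>w\<in>V. \<Sum>v\<in>V. x v * (real (gdist E v w) * y w))"
    by (rule sum.swap)
  also have "\<dots> = (\<Sum>w\<in>V. \<Sum>v\<in>V. y w * (real (gdist E w v) * x v))"
    using assms unfolding symmetric_gdist_def by (intro sum.cong refl) (auto simp: algebra_simps)
  also have "\<dots> = (\<Sum>v\<in>V. y v * dist_mult V E x v)"
    unfolding dist_mult_def by (simp add: sum_distrib_left)
  finally show ?thesis by simp
qed

lemma curvature_index_eqI:
  assumes sym: "symmetric_gdist V E"
    and z: "sum z V = 1" "\<forall>v\<in>V. dist_mult V E z v = c"
  shows "curvature_index V E = ereal c"
proof -
  have unique: "c' = c" if "sum y V = 1" "\<forall>v\<in>V. dist_mult V E y v = c'" for y c'
  proof -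
    have "c' = (\<Sum>v\<in>V. z v * dist_mult V E y v)"
      using that z by (simp add: sum_distrib_right[symmetric])
    also have "\<dots> = (\<Sum>v\<in>V. y v * dist_mult V E z v)"
      by (rule dist_mult_inner_commute[OF sym])
    also have "\<dots> = c"
      using that z by (simp add: sum_distrib_right[symmetric])
    finally show ?thesis .
  qed
  have no_balanced_potential: "sum w V \<noteq> 0" if "curvature_potential V E w" for w
  proof -
    have "1 = (\<Sum>v\<in>V. z v * dist_mult V E w v)"
      using that z unfolding curvature_potential_def by simp
    also have "\<dots> = (\<Sum>v\<in>V. w v * dist_mult V E z v)"
      by (rule dist_mult_inner_commute[OF sym])
    also have "\<dots> = c * sum w V"
      using z by (simp add: sum_distrib_left mult.commute)
    finally show ?thesis by auto
  qed
  have "(THE c. \<exists>x. sum x V = 1 \<and> (\<forall>v\<in>V. dist_mult V E x v = c)) = c"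
    using z unique by (intro the_equality) blast+
  then show ?thesis
    using no_balanced_potential unfolding curvature_index_def distance_exceptional_def by auto
qed

lemma distance_exceptional_kernel_vector:
  assumes "finite V" "symmetric_gdist V E" "distance_exceptional V E"
  shows "\<exists>y. sum y V = 1 \<and> (\<forall>v\<in>V. dist_mult V E y v = 0)"
proof -
  obtain y where y: "\<forall>v\<in>V. (\<Sum>i\<in>V. y i * real (gdist E i v)) = 0" "sum y V = 1"
    using linear_system_solvable_or_certificate[OF assms(1,1), of "\<lambda>i j. real (gdist E i j)" "\<lambda>_. 1"]
      assms(3)
    unfolding distance_exceptional_def curvature_potential_def dist_mult_def by auto
  have "dist_mult V E y v = 0" if "v \<in> V" for v
  proof -
    have "dist_mult V E y v = (\<Sum>i\<in>V. y i * real (gdist E i v))"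
      unfolding dist_mult_def using assms(2) that unfolding symmetric_gdist_def
      by (intro sum.cong refl) (auto simp: mult.commute)
    then show ?thesis using y that by simp
  qed
  with y show ?thesis by blast
qed

lemma curvature_index_eq_infinity_iff:
  assumes "finite V" "symmetric_gdist V E"
  shows "curvature_index V E = \<infinity> \<longleftrightarrow> \<not> (\<exists>x c. sum x V = 1 \<and> (\<forall>v\<in>V. dist_mult V E x v = c))"
proof
  assume "curvature_index V E = \<infinity>"
  then show "\<not> (\<exists>x c. sum x V = 1 \<and> (\<forall>v\<in>V. dist_mult V E x v = c))"
    using curvature_index_eqI[OF assms(2)] by force
next
  assume none: "\<not> (\<exists>x c. sum x V = 1 \<and> (\<forall>v\<in>V. dist_mult V E x v = c))"
  have "\<not> distance_exceptional V E"
    using distance_exceptional_kernel_vector[OF assms] none by blast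
  moreover have "sum x V = 0" if "curvature_potential V E x" for x
  proof (rule ccontr)
    assume "sum x V \<noteq> 0"
    then have "sum (\<lambda>v. x v / sum x V) V = 1 \<and>
      (\<forall>v\<in>V. dist_mult V E (\<lambda>v. x v / sum x V) v = 1 / sum x V)"
      using that unfolding curvature_potential_def dist_mult_def
      by (simp add: sum_divide_distrib[symmetric])
    with none show False by blast
  qed
  ultimately show "curvature_index V E = \<infinity>"
    unfolding curvature_index_def by auto
qed

lemma symmetric_gdist_cart_edges:
  assumes "connected_graph V1 E1" "connected_graph V2 E2"
  shows "symmetric_gdist (V1 \<times> V2) (cart_edges V1 E1 V2 E2)"
  unfolding symmetric_gdist_def
  using gdist_cart_edges[OF assms] gdist_commute[OF assms(1)] gdist_commute[OF assms(2)]
  by auto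

lemma dist_mult_cart_edges:
  assumes c1: "connected_graph V1 E1" and c2: "connected_graph V2 E2"
    and u: "u \<in> V1" and v: "v \<in> V2"
  shows "dist_mult (V1 \<times> V2) (cart_edges V1 E1 V2 E2) z (u, v) =
     dist_mult V1 E1 (\<lambda>a. \<Sum>b\<in>V2. z (a, b)) u + dist_mult V2 E2 (\<lambda>b. \<Sum>a\<in>V1. z (a, b)) v"
proof -
  have "dist_mult (V1 \<times> V2) (cart_edges V1 E1 V2 E2) z (u, v) =
      (\<Sum>(a, b)\<in>V1 \<times> V2. (real (gdist E1 u a) + real (gdist E2 v b)) * z (a, b))"
    unfolding dist_mult_def using gdist_cart_edges[OF c1 c2 u _ v] by (intro sum.cong) auto
  also have "\<dots> = (\<Sum>a\<in>V1. \<Sum>b\<in>V2. (real (gdist E1 u a) + real (gdist E2 v b)) * z (a, b))"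
    by (simp add: sum.cartesian_product)
  also have "\<dots> = (\<Sum>a\<in>V1. \<Sum>b\<in>V2. real (gdist E1 u a) * z (a, b)) +
                  (\<Sum>a\<in>V1. \<Sum>b\<in>V2. real (gdist E2 v b) * z (a, b))"
    by (simp add: distrib_right sum.distrib)
  also have "\<dots> = dist_mult V1 E1 (\<lambda>a. \<Sum>b\<in>V2. z (a, b)) u +
                  dist_mult V2 E2 (\<lambda>b. \<Sum>a\<in>V1. z (a, b)) v"
    unfolding dist_mult_def by (simp add: sum_distrib_left sum.swap[of _ V1 V2])
  finally show ?thesis .
qed

lemma curvature_index_cart_edges_eq_add:
  assumes c1: "connected_graph V1 E1" and c2: "connected_graph V2 E2"
    and x: "sum x V1 = 1" "\<forall>u\<in>V1. dist_mult V1 E1 x u = a"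
    and y: "sum y V2 = 1" "\<forall>v\<in>V2. dist_mult V2 E2 y v = b"
  shows "curvature_index (V1 \<times> V2) (cart_edges V1 E1 V2 E2) = ereal (a + b)"
proof (rule curvature_index_eqI[OF symmetric_gdist_cart_edges[OF c1 c2]])
  define z where "z = (\<lambda>p. x (fst p) * y (snd p))"
  have marginal1: "(\<lambda>u. \<Sum>v\<in>V2. z (u, v)) = x" and marginal2: "(\<lambda>v. \<Sum>u\<in>V1. z (u, v)) = y"
    unfolding z_def using x(1) y(1) by (simp_all add: sum_distrib_left[symmetric] sum_distrib_right[symmetric])
  have "sum z (V1 \<times> V2) = (\<Sum>u\<in>V1. \<Sum>v\<in>V2. z (u, v))"
    by (simp add: sum.cartesian_product)
  then show "sum z (V1 \<times> V2) = 1"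
    unfolding marginal1 using x(1) by simp
  show "\<forall>p\<in>V1 \<times> V2. dist_mult (V1 \<times> V2) (cart_edges V1 E1 V2 E2) z p = a + b"
    using dist_mult_cart_edges[OF c1 c2] marginal1 marginal2 x(2) y(2) by auto
qed

lemma curvature_index_cart_edges_finite:
  assumes c1: "connected_graph V1 E1" and c2: "connected_graph V2 E2"
    and "curvature_index (V1 \<times> V2) (cart_edges V1 E1 V2 E2) \<noteq> \<infinity>"
  shows "curvature_index V1 E1 \<noteq> \<infinity> \<and> curvature_index V2 E2 \<noteq> \<infinity>"
proof -
  have fin: "finite V1" "finite V2" and "V1 \<noteq> {}" "V2 \<noteq> {}"
    using c1 c2 unfolding connected_graph_def simple_graph_def by auto
  then obtain u0 v0 where u0: "u0 \<in> V1" and v0: "v0 \<in> V2" by blast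
  have "finite (V1 \<times> V2)"
    using fin by simp
  then obtain z c where z: "sum z (V1 \<times> V2) = 1"
    "\<forall>p\<in>V1 \<times> V2. dist_mult (V1 \<times> V2) (cart_edges V1 E1 V2 E2) z p = c"
    using assms(3) curvature_index_eq_infinity_iff[OF _ symmetric_gdist_cart_edges[OF c1 c2]]
    by blast
  define m1 where "m1 = (\<lambda>a. \<Sum>b\<in>V2. z (a, b))"
  define m2 where "m2 = (\<lambda>b. \<Sum>a\<in>V1. z (a, b))"
  have split: "dist_mult V1 E1 m1 u + dist_mult V2 E2 m2 v = c" if "u \<in> V1" "v \<in> V2" for u v
    using dist_mult_cart_edges[OF c1 c2 that, of z] z(2) that unfolding m1_def m2_def by auto
  have "sum z (V1 \<times> V2) = (\<Sum>u\<in>V1. \<Sum>v\<in>V2. z (u, v))"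
    by (simp add: sum.cartesian_product)
  then have "sum m1 V1 = 1" "sum m2 V2 = 1"
    using z(1) unfolding m1_def m2_def by (simp_all add: sum.swap[of _ V1 V2])
  moreover have "\<forall>u\<in>V1. dist_mult V1 E1 m1 u = c - dist_mult V2 E2 m2 v0"
    "\<forall>v\<in>V2. dist_mult V2 E2 m2 v = c - dist_mult V1 E1 m1 u0"
    using split u0 v0 by (auto simp: algebra_simps)
  ultimately show ?thesis
    using curvature_index_eq_infinity_iff[OF fin(1) connected_graph_symmetric_gdist[OF c1]]
      curvature_index_eq_infinity_iff[OF fin(2) connected_graph_symmetric_gdist[OF c2]]
    by blast
qed

theorem theorem3p4:
  fixes V1 :: "'a set" and E1 :: "'a \<Rightarrow> 'a \<Rightarrow> bool"
    and V2 :: "'b set" and E2 :: "'b \<Rightarrow> 'b \<Rightarrow> bool"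
  assumes "connected_graph V1 E1" and "connected_graph V2 E2"
  shows "(curvature_index V1 E1 < \<infinity> \<and> curvature_index V2 E2 < \<infinity> \<longrightarrow>
            curvature_index (V1 \<times> V2) (cart_edges V1 E1 V2 E2)
              = curvature_index V1 E1 + curvature_index V2 E2)
       \<and> (curvature_index V1 E1 = \<infinity> \<or> curvature_index V2 E2 = \<infinity> \<longrightarrow>
            curvature_index (V1 \<times> V2) (cart_edges V1 E1 V2 E2) = \<infinity>)"
proof (intro conjI impI)
  have fin: "finite V1" "finite V2"
    using assms unfolding connected_graph_def simple_graph_def by auto
  note sym = assms[THEN connected_graph_symmetric_gdist]
  assume "curvature_index V1 E1 < \<infinity> \<and> curvature_index V2 E2 < \<infinity>"
  then obtain x a y b where x: "sum x V1 = 1" "\<forall>u\<in>V1. dist_mult V1 E1 x u = a"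
    and y: "sum y V2 = 1" "\<forall>v\<in>V2. dist_mult V2 E2 y v = b"
    using curvature_index_eq_infinity_iff[OF fin(1) sym(1)] curvature_index_eq_infinity_iff[OF fin(2) sym(2)]
    by auto
  then have "curvature_index V1 E1 = ereal a" "curvature_index V2 E2 = ereal b"
    "curvature_index (V1 \<times> V2) (cart_edges V1 E1 V2 E2) = ereal (a + b)"
    using curvature_index_eqI[OF sym(1)] curvature_index_eqI[OF sym(2)]
      curvature_index_cart_edges_eq_add[OF assms] by auto
  then show "curvature_index (V1 \<times> V2) (cart_edges V1 E1 V2 E2)
      = curvature_index V1 E1 + curvature_index V2 E2"
    by simp
next
  assume "curvature_index V1 E1 = \<infinity> \<or> curvature_index V2 E2 = \<infinity>"
  then show "curvature_index (V1 \<times> V2) (cart_edges V1 E1 V2 E2) = \<infinity>"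
    using curvature_index_cart_edges_finite[OF assms] by blast
qed

end
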